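(* Let $\mathbb{F}$ be a field, let $P(\lambda)\in\mathbb{F}[\lambda]^{m\times n}$ have normal rank $r>0$, and let $P(\lambda)=L(\lambda)E(\lambda)R(\lambda)$ with $L\in\mathbb{F}[\lambda]^{m\times r}$, $E\in\mathbb{F}[\lambda]^{r\times r}$, $R\in\mathbb{F}[\lambda]^{r\times n}$. Let $\rho_{max}$ be the largest minimal index of $\mathcal{R}ow(P)$ and $c_{max}$ the largest minimal index of $\mathcal{C}ol(P)$. Then $$\deg(L)+\deg(E)+\deg(R)\ge\deg(L)+\deg(R)\ge\rho_{max}+c_{max}.$$ Consequently, if $\rho_{max}+c_{max}>\deg(P)$, then no such factorization $P=LER$ (nor any factorization $P=LR$ with $L\in\mathbb{F}[\lambda]^{m\times r}$, $R\in\mathbb{F}[\lambda]^{r\times n}$) has the sum of the degrees of its factors equal to $\deg(P)$.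
   Context: Normal rank: rank over $\mathbb{F}(\lambda)$. Degree of a polynomial matrix: maximum degree of its entries. $\mathcal{R}ow(P)=\{wP:w\in\mathbb{F}(\lambda)^{1\times m}\}$, $\mathcal{C}ol(P)=\{Pv:v\in\mathbb{F}(\lambda)^{n\times1}\}$. Minimal indices of a rational subspace: the degrees of the vectors of a minimal basis, i.e. a basis of polynomial vectors whose sum of degrees is minimal among all polynomial bases. *)

theory Defs
  imports "Jordan_Normal_Form.VS_Connect" "Jordan_Normal_Form.DL_Rank"
    "HOL-Computational_Algebra.Polynomial_Factorial"
begin

text \<open>Polynomial matrices over a field F are 'a poly mat (Jordan_Normal_Form);
  the field of rational functions F(lambda) is 'a poly fract, with the
  canonical embedding to_fract.\<close>

definition emb_vec :: "'a::field poly vec \<Rightarrow> 'a poly fract vec" where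
  "emb_vec v = map_vec to_fract v"

definition emb_mat :: "'a::field poly mat \<Rightarrow> 'a poly fract mat" where
  "emb_mat A = map_mat to_fract A"

definition normal_rank :: "'a::field poly mat \<Rightarrow> nat" where
  "normal_rank P = vec_space.rank (dim_row P) (emb_mat P)"

definition mdeg :: "'a::zero poly mat \<Rightarrow> nat" where
  "mdeg A = Max (insert 0 {degree (A $$ (i, j)) | i j. i < dim_row A \<and> j < dim_col A})"

definition vdeg :: "'a::zero poly vec \<Rightarrow> nat" where
  "vdeg v = Max (insert 0 {degree (v $ i) | i. i < dim_vec v})"

text \<open>Rational row space Row(P) = {w P} (row vectors written as vectors of length n)
  and column space Col(P) = {P v}.\<close>
definition row_space :: "'a::field poly mat \<Rightarrow> 'a poly fract vec set" where
  "row_space P = {transpose_mat (emb_mat P) *\<^sub>v w | w. w \<in> carrier_vec (dim_row P)}"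

definition col_space :: "'a::field poly mat \<Rightarrow> 'a poly fract vec set" where
  "col_space P = {emb_mat P *\<^sub>v v | v. v \<in> carrier_vec (dim_col P)}"

definition poly_basis :: "nat \<Rightarrow> 'a::field poly fract vec set \<Rightarrow> 'a poly vec set \<Rightarrow> bool" where
  "poly_basis n V B \<longleftrightarrow> finite B \<and> B \<subseteq> carrier_vec n \<and>
     LinearCombinations.module.lin_indpt class_ring (module_vec TYPE('a poly fract) n) (emb_vec ` B) \<and>
     LinearCombinations.module.span class_ring (module_vec TYPE('a poly fract) n) (emb_vec ` B) = V"

definition minimal_basis :: "nat \<Rightarrow> 'a::field poly fract vec set \<Rightarrow> 'a poly vec set \<Rightarrow> bool" where
  "minimal_basis n V B \<longleftrightarrow> poly_basis n V B \<and>
     (\<forall>B'. poly_basis n V B' \<longrightarrow> (\<Sum>b\<in>B. vdeg b) \<le> (\<Sum>b\<in>B'. vdeg b))"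

definition max_index :: "'a::zero poly vec set \<Rightarrow> nat" where
  "max_index B = Max (vdeg ` B)"

end

(* If P = L (E R) with inner dimension r equal to the normal rank, the r columns of L already
   span Col(P) over F(lambda), and dually the r rows of R span Row(P). A vector of a minimal basis
   whose degree exceeds that of every member of such a spanning family could be exchanged for one
   of them, lowering the degree sum; so c_max <= deg L and rho_max <= deg R. *)

theory Submission
  imports Defs "Subresultants.More_Homomorphisms"
begin

context vec_space
begin

lemma rank_basis_in_cols:
  assumes A: "A \<in> carrier_mat n nc"
  obtains S where "S \<subseteq> set (cols A)" "lin_indpt S" "card S = rank A" "span S = span (set (cols A))"
proof -
  obtain S where S: "maximal S (\<lambda>T. T \<subseteq> set (cols A) \<and> lin_indpt T)"
    using maximal_exists[of "\<lambda>T. T \<subseteq> set (cols A) \<and> lin_indpt T" "card (set (cols A))" "{}"]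
    by (meson List.finite_set card_mono empty_iff empty_subsetI finite_lin_indpt2 rev_finite_subset)
  have sub: "S \<subseteq> set (cols A)" and li: "lin_indpt S" using S unfolding maximal_def by auto
  have colsC: "set (cols A) \<subseteq> carrier_vec n" using A cols_dim by blast
  have SC: "S \<subseteq> carrier_vec n" using sub colsC by auto
  have "set (cols A) \<subseteq> span S"
  proof
    fix c assume c: "c \<in> set (cols A)"
    show "c \<in> span S"
    proof (rule ccontr)
      assume c_new: "c \<notin> span S"
      have cS: "c \<notin> S" using c_new in_own_span[OF SC] by auto
      have "lin_indpt (S \<union> {c})" using lin_dep_iff_in_span[OF SC li _ cS] c_new c colsC by auto
      with S sub c have "S \<union> {c} = S" unfolding maximal_def by blast
      with cS show False by auto
    qed
  qed
  hence "span S = span (set (cols A))"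
    using span_is_subset[OF _ span_is_submodule[OF SC]] span_is_monotone[OF sub] by blast
  moreover have "card S = rank A" using rank_card_indpt[OF A S] by simp
  ultimately show thesis using that sub li by blast
qed

lemma cols_mult_in_span:
  assumes B: "B \<in> carrier_mat n k" and C: "C \<in> carrier_mat k p"
  shows "set (cols (B * C)) \<subseteq> span (set (cols B))"
proof
  fix x assume "x \<in> set (cols (B * C))"
  then obtain j where j: "j < p" and "x = col (B * C) j" using B C by (auto simp: cols_def)
  hence "x = B *\<^sub>v col C j" using col_mult2[OF B C j] by simp
  moreover have "col C j \<in> carrier_vec k" using C j by simp
  ultimately have "x \<in> col_space B" unfolding col_space_eq[OF B] using B by auto
  thus "x \<in> span (set (cols B))" unfolding col_space_def .
qed

lemma card_le_if_lin_indpt_in_span: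
  assumes "finite S" "finite T" "T \<subseteq> carrier_vec n" "lin_indpt S" "S \<subseteq> span T"
  shows "card S \<le> card T"
  using replacement[OF assms] by fastforce

lemma span_eq_if_lin_indpt_in_span_card_ge:
  assumes "finite S" "finite T" "T \<subseteq> carrier_vec n" "lin_indpt S" "S \<subseteq> span T"
    and "card T \<le> card S"
  shows "span S = span T"
proof -
  obtain C where "finite C" "int (card C) \<le> int (card T) - int (card S)" "span (S \<union> C) = span T"
    using replacement[OF assms(1-5)] by blast
  with assms(6) have "card C = 0" by linarith
  with \<open>finite C\<close> have "C = {}" by simp
  with \<open>span (S \<union> C) = span T\<close> show ?thesis by simp
qed

lemma rank_mult_le:
  assumes B: "B \<in> carrier_mat n k" and C: "C \<in> carrier_mat k p"
  shows "rank (B * C) \<le> k"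
proof -
  obtain S where S: "S \<subseteq> set (cols (B * C))" "lin_indpt S" "card S = rank (B * C)"
    by (metis rank_basis_in_cols[OF mult_carrier_mat[OF B C]])
  have "S \<subseteq> span (set (cols B))" using S(1) cols_mult_in_span[OF B C] by auto
  moreover have "set (cols B) \<subseteq> carrier_vec n" using B cols_dim by blast
  ultimately have "card S \<le> card (set (cols B))"
    using card_le_if_lin_indpt_in_span[OF finite_subset[OF S(1)] _ _ S(2)] by simp
  also have "\<dots> \<le> k" using card_length[of "cols B"] B by simp
  finally show ?thesis using S(3) by simp
qed

lemma rank_factorization:
  assumes A: "A \<in> carrier_mat n nc"
  obtains X N where "X \<in> carrier_mat n (rank A)" "N \<in> carrier_mat (rank A) nc" "A = X * N"
proof -
  obtain S where S: "S \<subseteq> set (cols A)" "card S = rank A" "span S = span (set (cols A))"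
    by (metis rank_basis_in_cols[OF A])
  obtain xs where xs: "set xs = S" "distinct xs"
    using finite_distinct_list[OF finite_subset[OF S(1) List.finite_set]] by blast
  define X where "X = mat_of_cols n xs"
  have X: "X \<in> carrier_mat n (rank A)" using xs S(2) distinct_card X_def by fastforce
  have xsC: "set xs \<subseteq> carrier_vec n" using xs(1) S(1) A cols_dim by blast
  have span_X: "col_space X = span (set (cols A))"
    unfolding col_space_def X_def cols_mat_of_cols[OF xsC] xs(1) S(3) ..
  have "\<exists>x \<in> carrier_vec (rank A). X *\<^sub>v x = col A j" if "j < nc" for j
  proof -
    have "set (cols A) \<subseteq> carrier_vec n" using A cols_dim by blast
    moreover have "col A j \<in> set (cols A)" using that A by (auto simp: cols_def)
    ultimately have "col A j \<in> span (set (cols A))" using in_own_span by blast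
    thus ?thesis using X unfolding span_X[symmetric] col_space_eq[OF X] by auto
  qed
  then obtain x where x: "\<And>j. j < nc \<Longrightarrow> x j \<in> carrier_vec (rank A) \<and> X *\<^sub>v x j = col A j"
    by metis
  define N where "N = mat_of_cols (rank A) (map x [0..<nc])"
  have N: "N \<in> carrier_mat (rank A) nc" unfolding N_def by auto
  have "A = X * N"
  proof (rule mat_col_eqI)
    fix j assume "j < dim_col (X * N)"
    hence j: "j < nc" using N by simp
    have "col N j = x j" unfolding N_def using j x[OF j] by (subst col_mat_of_cols) auto
    thus "col A j = col (X * N) j" using col_mult2[OF X N j] x[OF j] by simp
  qed (use A X N in auto)
  with X N show thesis by (rule that)
qed

lemma span_cols_factor_eq:
  assumes A: "A \<in> carrier_mat n p" and Q: "Q \<in> carrier_mat n q" and Y: "Y \<in> carrier_mat q p"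
    and AQY: "A = Q * Y" and q: "q \<le> rank A"
  shows "span (set (cols Q)) = span (set (cols A))"
proof -
  obtain S where S: "S \<subseteq> set (cols A)" "lin_indpt S" "card S = rank A"
    and span_S: "span S = span (set (cols A))"
    by (metis rank_basis_in_cols[OF A])
  have QC: "set (cols Q) \<subseteq> carrier_vec n" using Q cols_dim by blast
  have "S \<subseteq> span (set (cols Q))" using S(1) cols_mult_in_span[OF Q Y] AQY by auto
  moreover have "card (set (cols Q)) \<le> card S" using card_length[of "cols Q"] Q S(3) q by simp
  ultimately have "span S = span (set (cols Q))"
    using span_eq_if_lin_indpt_in_span_card_ge[OF _ _ QC S(2)] finite_subset[OF S(1)] by simp
  with span_S show ?thesis by simp
qed

lemma span_cols_nonzero_if_rank_pos:
  assumes A: "A \<in> carrier_mat n nc" and rk: "0 < rank A"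
  shows "span (set (cols A)) \<noteq> {0\<^sub>v n}"
proof
  assume span_0: "span (set (cols A)) = {0\<^sub>v n}"
  obtain S where S: "S \<subseteq> set (cols A)" "lin_indpt S" "card S = rank A"
    by (metis rank_basis_in_cols[OF A])
  have AC: "set (cols A) \<subseteq> carrier_vec n" using A cols_dim by blast
  have "S \<subseteq> {0\<^sub>v n}" using S(1) in_own_span[OF AC] span_0 by auto
  moreover have "S \<noteq> {}" using S(3) rk by auto
  ultimately have "0\<^sub>v n \<in> S" by auto
  moreover have "(UNIV :: 'a set) \<noteq> {0}" by (metis UNIV_I singletonD zero_neq_one)
  hence "0\<^sub>v n \<notin> S" using zero_nin_lin_indpt[of S] S(1,2) AC by (auto simp: class_ring_simps)
  ultimately show False by simp
qed

lemma not_in_span_remove: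
  assumes "S \<subseteq> carrier_vec n" "lin_indpt S" "b \<in> S"
  shows "b \<notin> span (S - {b})"
proof -
  have "lin_indpt (S - {b})" using subset_li_is_li[OF assms(2)] by blast
  moreover have "S - {b} \<union> {b} = S" using assms(3) by auto
  ultimately show ?thesis using lin_dep_iff_in_span[of "S - {b}" b] assms by auto
qed

lemma basis_exchange:
  assumes SC: "S \<subseteq> carrier_vec n" and fin: "finite S" and li: "lin_indpt S" and b: "b \<in> S"
    and g: "g \<in> span S" "g \<notin> span (S - {b})"
  shows "lin_indpt (insert g (S - {b}))" and "span (insert g (S - {b})) = span S"
proof -
  have S0C: "S - {b} \<subseteq> carrier_vec n" using SC by auto
  have li0: "lin_indpt (S - {b})" using subset_li_is_li[OF li] by blast
  have gC: "g \<in> carrier_vec n" using g(1) span_is_subset2[OF SC] by auto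
  have g0: "g \<notin> S - {b}" using g(2) in_own_span[OF S0C] by auto
  show li': "lin_indpt (insert g (S - {b}))"
    using lin_dep_iff_in_span[OF S0C li0 gC g0] g(2) by simp
  have "card S > 0" using fin b card_gt_0_iff by blast
  hence "card (insert g (S - {b})) = card S" using fin b g0 by simp
  moreover have "insert g (S - {b}) \<subseteq> span S" using g(1) in_own_span[OF SC] by auto
  ultimately show "span (insert g (S - {b})) = span S"
    using span_eq_if_lin_indpt_in_span_card_ge[OF _ fin SC li'] fin by simp
qed

end

lemma rank_transpose_le:
  fixes A :: "'a::field mat"
  assumes A: "A \<in> carrier_mat n p"
  shows "vec_space.rank p A\<^sup>T \<le> vec_space.rank n A"
proof -
  obtain X N where X: "X \<in> carrier_mat n (vec_space.rank n A)"
    and N: "N \<in> carrier_mat (vec_space.rank n A) p" and "A = X * N"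
    by (metis vec_space.rank_factorization[OF A])
  hence "A\<^sup>T = N\<^sup>T * X\<^sup>T" using transpose_mult by simp
  thus ?thesis using vec_space.rank_mult_le[of "N\<^sup>T" p _ "X\<^sup>T" n] N X by simp
qed

lemma rank_transpose:
  fixes A :: "'a::field mat"
  assumes "A \<in> carrier_mat n p"
  shows "vec_space.rank p A\<^sup>T = vec_space.rank n A"
  using rank_transpose_le[OF assms] rank_transpose_le[of "A\<^sup>T" p n] assms by simp

abbreviation frac_span :: "nat \<Rightarrow> 'a::field poly fract vec set \<Rightarrow> 'a poly fract vec set" where
  "frac_span n \<equiv> LinearCombinations.module.span class_ring (module_vec TYPE('a poly fract) n)"

lemma inj_emb_vec: "inj emb_vec"
proof (rule injI)
  fix u v :: "'a::field poly vec"
  assume "emb_vec u = emb_vec v"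
  hence "dim_vec u = dim_vec v" and "\<And>i. i < dim_vec u \<Longrightarrow> to_fract (u $ i) = to_fract (v $ i)"
    unfolding emb_vec_def by (metis index_map_vec(2), metis index_map_vec(1,2))
  thus "u = v" by (intro eq_vecI) auto
qed

lemma emb_vec_image_remove: "emb_vec ` (B - {b}) = emb_vec ` B - {emb_vec b}"
  by (simp only: image_set_diff[OF inj_emb_vec] image_insert image_empty)

lemma emb_vec_carrier_vec: "v \<in> carrier_vec n \<Longrightarrow> emb_vec v \<in> carrier_vec n"
  unfolding emb_vec_def by simp

lemma emb_mat_carrier_mat: "A \<in> carrier_mat m n \<Longrightarrow> emb_mat A \<in> carrier_mat m n"
  unfolding emb_mat_def by simp

lemma emb_mat_mult:
  "A \<in> carrier_mat m k \<Longrightarrow> B \<in> carrier_mat k n \<Longrightarrow> emb_mat (A * B) = emb_mat A * emb_mat B"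
  unfolding emb_mat_def by (rule to_fract_hom.mat_hom_mult)

lemma emb_mat_transpose: "emb_mat A\<^sup>T = (emb_mat A)\<^sup>T"
  unfolding emb_mat_def by (rule map_mat_transpose[symmetric])

lemma set_cols_emb_mat: "set (cols (emb_mat A)) = emb_vec ` set (cols A)"
  unfolding cols_def emb_mat_def emb_vec_def by auto

lemma col_space_eq_frac_span:
  assumes "P \<in> carrier_mat m n"
  shows "col_space P = frac_span m (set (cols (emb_mat P)))"
proof -
  have "col_space P = vec_space.col_space m (emb_mat P)"
    using vec_space.col_space_eq[OF emb_mat_carrier_mat[OF assms]] assms
    unfolding col_space_def by (auto simp: emb_mat_def)
  thus ?thesis unfolding vec_space.col_space_def .
qed

lemma row_space_eq_col_space_transpose: "row_space P = col_space P\<^sup>T"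
  unfolding row_space_def col_space_def emb_mat_transpose by simp

lemma normal_rank_transpose:
  "P \<in> carrier_mat m n \<Longrightarrow> normal_rank P\<^sup>T = normal_rank P"
  unfolding normal_rank_def emb_mat_transpose
  using rank_transpose[OF emb_mat_carrier_mat] by simp

lemma mdeg_transpose: "mdeg A\<^sup>T = mdeg A"
proof -
  have "{degree (A\<^sup>T $$ (i, j)) | i j. i < dim_row A\<^sup>T \<and> j < dim_col A\<^sup>T}
      = {degree (A $$ (i, j)) | i j. i < dim_row A \<and> j < dim_col A}"
    by (auto, blast, metis index_transpose_mat(1))
  thus ?thesis unfolding mdeg_def by simp
qed

lemma degree_entry_le_mdeg:
  assumes "i < dim_row A" "j < dim_col A"
  shows "degree (A $$ (i, j)) \<le> mdeg A"
proof -
  have "{degree (A $$ (i, j)) | i j. i < dim_row A \<and> j < dim_col A}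
     \<subseteq> (\<lambda>(i, j). degree (A $$ (i, j))) ` ({..<dim_row A} \<times> {..<dim_col A})" by auto
  hence "finite {degree (A $$ (i, j)) | i j. i < dim_row A \<and> j < dim_col A}"
    using finite_subset by blast
  thus ?thesis unfolding mdeg_def using assms by (intro Max_ge) auto
qed

lemma vdeg_le:
  assumes "\<And>i. i < dim_vec v \<Longrightarrow> degree (v $ i) \<le> d"
  shows "vdeg v \<le> d"
  unfolding vdeg_def using assms by (subst Max_le_iff) auto

lemma vdeg_col_le_mdeg: "v \<in> set (cols A) \<Longrightarrow> vdeg v \<le> mdeg A"
  by (auto simp: cols_def intro!: vdeg_le degree_entry_le_mdeg)

lemma poly_basis_exchange:
  assumes B: "poly_basis n V B" and b: "b \<in> B"
    and g: "g \<in> carrier_vec n" "emb_vec g \<in> V"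
    and g_new: "emb_vec g \<notin> frac_span n (emb_vec ` (B - {b}))"
  shows "poly_basis n V (insert g (B - {b}))"
proof -
  interpret vs: vec_space "TYPE('a::field poly fract)" n .
  have fin: "finite B" and BC: "B \<subseteq> carrier_vec n" and li: "vs.lin_indpt (emb_vec ` B)"
    and span_B: "vs.span (emb_vec ` B) = V"
    using B unfolding poly_basis_def by auto
  have EBC: "emb_vec ` B \<subseteq> carrier_vec n" using BC emb_vec_carrier_vec by blast
  have "emb_vec g \<in> vs.span (emb_vec ` B)" using g(2) span_B by simp
  note exchange = vs.basis_exchange[OF EBC finite_imageI[OF fin] li imageI[OF b] this
      g_new[unfolded emb_vec_image_remove]]
  have "emb_vec ` insert g (B - {b}) = insert (emb_vec g) (emb_vec ` B - {emb_vec b})"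
    by (simp only: image_insert emb_vec_image_remove)
  with exchange span_B fin BC g(1) show ?thesis unfolding poly_basis_def by auto
qed

lemma minimal_basis_vdeg_le:
  assumes B: "minimal_basis n V B" and b: "b \<in> B"
    and G: "G \<subseteq> carrier_vec n" "emb_vec ` G \<subseteq> V" "V \<subseteq> frac_span n (emb_vec ` G)"
    and deg_G: "\<And>g. g \<in> G \<Longrightarrow> vdeg g \<le> d"
  shows "vdeg b \<le> d"
proof (rule ccontr)
  assume deg_b: "\<not> vdeg b \<le> d"
  interpret vs: vec_space "TYPE('a::field poly fract)" n .
  have basis: "poly_basis n V B"
    and min: "\<And>B'. poly_basis n V B' \<Longrightarrow> (\<Sum>b\<in>B. vdeg b) \<le> (\<Sum>b\<in>B'. vdeg b)"
    using B unfolding minimal_basis_def by auto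
  have fin: "finite B" and BC: "B \<subseteq> carrier_vec n" and li: "vs.lin_indpt (emb_vec ` B)"
    and span_B: "vs.span (emb_vec ` B) = V"
    using basis unfolding poly_basis_def by auto
  let ?B0 = "emb_vec ` (B - {b})"
  have EBC: "emb_vec ` B \<subseteq> carrier_vec n" using BC emb_vec_carrier_vec by blast
  have B0C: "?B0 \<subseteq> carrier_vec n" using EBC by auto
  have "emb_vec b \<notin> vs.span ?B0"
    using vs.not_in_span_remove[OF EBC li imageI[OF b]] unfolding emb_vec_image_remove .
  moreover have "emb_vec b \<in> V" using vs.in_own_span[OF EBC] b span_B by auto
  ultimately have "\<not> emb_vec ` G \<subseteq> vs.span ?B0"
    using G(3) vs.span_is_subset[OF _ vs.span_is_submodule[OF B0C]] by blast
  then obtain g where g: "g \<in> G" "emb_vec g \<notin> vs.span ?B0" by blast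
  have "g \<notin> B - {b}" using g(2) vs.in_own_span[OF B0C] by auto
  hence "(\<Sum>b\<in>insert g (B - {b}). vdeg b) = vdeg g + (\<Sum>b\<in>B - {b}. vdeg b)"
    using fin by simp
  moreover have "(\<Sum>b\<in>B. vdeg b) = vdeg b + (\<Sum>b\<in>B - {b}. vdeg b)"
    using fin b by (simp add: sum.remove)
  moreover have "poly_basis n V (insert g (B - {b}))"
    using poly_basis_exchange[OF basis b _ _ g(2)] g(1) G by auto
  hence "(\<Sum>b\<in>B. vdeg b) \<le> (\<Sum>b\<in>insert g (B - {b}). vdeg b)" by (rule min)
  ultimately show False using deg_G[OF g(1)] deg_b by linarith
qed

lemma max_index_le:
  assumes B: "minimal_basis n V B"
    and V: "V \<noteq> {0\<^sub>v n}" \<comment> \<open>rules out B = {}, where Max is unspecified\<close>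
    and G: "G \<subseteq> carrier_vec n" "emb_vec ` G \<subseteq> V" "V \<subseteq> frac_span n (emb_vec ` G)"
    and deg_G: "\<And>g. g \<in> G \<Longrightarrow> vdeg g \<le> d"
  shows "max_index B \<le> d"
proof -
  interpret vs: vec_space "TYPE('a::field poly fract)" n .
  have fin: "finite B" and span_B: "vs.span (emb_vec ` B) = V"
    using B unfolding minimal_basis_def poly_basis_def by auto
  have "B \<noteq> {}" using V span_B vs.span_empty by auto
  thus ?thesis unfolding max_index_def
    using fin minimal_basis_vdeg_le[OF B _ G deg_G] by (subst Max_le_iff) auto
qed

lemma max_index_col_space_le:
  fixes P :: "'a::field poly mat"
  assumes P: "P \<in> carrier_mat m n" and rk: "0 < normal_rank P"
    and B: "minimal_basis m (col_space P) B"
    and L: "L \<in> carrier_mat m k" and M: "M \<in> carrier_mat k n" and PLM: "P = L * M"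
    and k: "k \<le> normal_rank P"
  shows "max_index B \<le> mdeg L"
proof -
  interpret vs: vec_space "TYPE('a poly fract)" m .
  have P': "emb_mat P \<in> carrier_mat m n" using emb_mat_carrier_mat[OF P] .
  have rank: "vs.rank (emb_mat P) = normal_rank P" using P unfolding normal_rank_def by simp
  have V: "col_space P = vs.span (set (cols (emb_mat P)))" using col_space_eq_frac_span[OF P] .
  have span_L: "vs.span (emb_vec ` set (cols L)) = col_space P"
    using vs.span_cols_factor_eq[OF P' emb_mat_carrier_mat[OF L] emb_mat_carrier_mat[OF M]]
      emb_mat_mult[OF L M] PLM k rank V
    unfolding set_cols_emb_mat by simp
  have "col_space P \<noteq> {0\<^sub>v m}"
    using vs.span_cols_nonzero_if_rank_pos[OF P'] rk rank V by simp
  moreover have LC: "set (cols L) \<subseteq> carrier_vec m" using L cols_dim by blast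
  ultimately show ?thesis
  proof (rule max_index_le[OF B])
    have "emb_vec ` set (cols L) \<subseteq> carrier_vec m" using LC emb_vec_carrier_vec by blast
    thus "emb_vec ` set (cols L) \<subseteq> col_space P" using vs.in_own_span span_L by blast
    show "col_space P \<subseteq> frac_span m (emb_vec ` set (cols L))" using span_L by simp
  qed (rule vdeg_col_le_mdeg)
qed

lemma max_index_row_space_le:
  fixes P :: "'a::field poly mat"
  assumes P: "P \<in> carrier_mat m n" and rk: "0 < normal_rank P"
    and B: "minimal_basis n (row_space P) B"
    and M: "M \<in> carrier_mat m k" and R: "R \<in> carrier_mat k n" and PMR: "P = M * R"
    and k: "k \<le> normal_rank P"
  shows "max_index B \<le> mdeg R"
proof -
  have "P\<^sup>T = R\<^sup>T * M\<^sup>T" using PMR transpose_mult[OF M R] by simp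
  with max_index_col_space_le[of "P\<^sup>T" n m B "R\<^sup>T" k "M\<^sup>T"] P rk B M R k
  show ?thesis
    unfolding row_space_eq_col_space_transpose normal_rank_transpose[OF P] mdeg_transpose by simp
qed

theorem lemma3p4:
  fixes P :: "'a::field poly mat" and m n r :: nat
    and Br Bc :: "'a poly vec set"
  assumes P: "P \<in> carrier_mat m n"
    and rk: "normal_rank P = r" and r_pos: "r > 0"
    and Br: "minimal_basis n (row_space P) Br"
    and Bc: "minimal_basis m (col_space P) Bc"
  shows "(\<forall>L E R. L \<in> carrier_mat m r \<longrightarrow> E \<in> carrier_mat r r \<longrightarrow> R \<in> carrier_mat r n \<longrightarrow>
            P = L * E * R \<longrightarrow>
            mdeg L + mdeg E + mdeg R \<ge> mdeg L + mdeg R \<and>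
            mdeg L + mdeg R \<ge> max_index Br + max_index Bc)
    \<and> (max_index Br + max_index Bc > mdeg P \<longrightarrow>
        (\<forall>L E R. L \<in> carrier_mat m r \<longrightarrow> E \<in> carrier_mat r r \<longrightarrow> R \<in> carrier_mat r n \<longrightarrow>
            P = L * E * R \<longrightarrow> mdeg L + mdeg E + mdeg R \<noteq> mdeg P)
      \<and> (\<forall>L R. L \<in> carrier_mat m r \<longrightarrow> R \<in> carrier_mat r n \<longrightarrow>
            P = L * R \<longrightarrow> mdeg L + mdeg R \<noteq> mdeg P))"
proof -
  have bound: "max_index Br + max_index Bc \<le> mdeg L + mdeg R"
    if "L \<in> carrier_mat m r" "M \<in> carrier_mat r n" "P = L * M"
      and "M' \<in> carrier_mat m r" "R \<in> carrier_mat r n" "P = M' * R" for L M M' R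
    using max_index_col_space_le[OF P _ Bc that(1-3)] max_index_row_space_le[OF P _ Br that(4-6)]
      rk r_pos by simp
  have bound_LER: "max_index Br + max_index Bc \<le> mdeg L + mdeg R"
    if L: "L \<in> carrier_mat m r" and E: "E \<in> carrier_mat r r" and R: "R \<in> carrier_mat r n"
      and "P = L * E * R" for L E R
    using bound[OF L mult_carrier_mat[OF E R] _ mult_carrier_mat[OF L E] R] that(4)
      assoc_mult_mat[OF L E R] by simp
  have bound_LR: "max_index Br + max_index Bc \<le> mdeg L + mdeg R"
    if "L \<in> carrier_mat m r" "R \<in> carrier_mat r n" "P = L * R" for L R
    using bound[OF that(1,2,3,1,2,3)] .
  show ?thesis
  proof (intro conjI impI allI)
    fix L E R
    assume "L \<in> carrier_mat m r" "E \<in> carrier_mat r r" "R \<in> carrier_mat r n" "P = L * E * R"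
    thus "mdeg L + mdeg R \<le> mdeg L + mdeg E + mdeg R"
      and "max_index Br + max_index Bc \<le> mdeg L + mdeg R"
      using bound_LER by simp_all
  next
    fix L E R
    assume "mdeg P < max_index Br + max_index Bc" "L \<in> carrier_mat m r" "E \<in> carrier_mat r r"
      "R \<in> carrier_mat r n" "P = L * E * R"
    thus "mdeg L + mdeg E + mdeg R \<noteq> mdeg P" using bound_LER[of L E R] by linarith
  next
    fix L R
    assume "mdeg P < max_index Br + max_index Bc" "L \<in> carrier_mat m r" "R \<in> carrier_mat r n"
      "P = L * R"
    thus "mdeg L + mdeg R \<noteq> mdeg P" using bound_LR[of L R] by linarith
  qed
qed

end
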